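(* Let $(G,X,\alpha)$ and $(H,X,\gamma)$ be $G$-spaces (with the same phase space $X$), and let $(\varphi,\mathrm{id}):(G,X,\alpha)\to(H,X,\gamma)$ be an equivariant pair of maps, i.e. $\varphi:G\to H$ is a continuous homomorphism with $\alpha(g,x)=\gamma(\varphi(g),x)$ for all $g\in G$, $x\in X$. Assume $\varphi$ is an epimorphism (surjective). Then: (a) $\ker\varphi\subset \ker_\alpha$; (b) $\varphi(\ker_\alpha)=\ker_\gamma$, and if $\alpha$ is effective then $\gamma$ is effective; (c) $Gx=Hx$ for every $x\in X$; in particular, if $\alpha$ is transitive then $\gamma$ is transitive; (d) if $\alpha$ is open (resp. $d$-open) then $\gamma$ is open (resp. $d$-open), and the components of the actions $\alpha$ and $\gamma$ coincide; (e) if $\mathcal U$ is an equiuniformity on $X$ for $(H,X,\gamma)$, then $\mathcal U$ is an equiuniformity on $X$ for $(G,X,\alpha)$; hence if $(H,X,\gamma)$ is $G$-Tychonoff then $(G,X,\alpha)$ is $G$-Tychonoff.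
   Context: All spaces are Tychonoff and all maps continuous. A $G$-space $(G,X,\alpha)$ is a topological group $G$ with a continuous action $\alpha:G\times X\to X$ (written $gx=\alpha(g,x)$). The kernel of the action is $\ker_\alpha=\{g\in G: gx=x \text{ for all } x\in X\}$; the action is effective if $\ker_\alpha=\{e\}$ and transitive if $Gx=X$ for some (any) $x$. $N_G(e)$ denotes the family of open neighborhoods of the unit. The action is open if $x\in\operatorname{Int}(Ox)$ for all $x\in X$, $O\in N_G(e)$, and $d$-open if $x\in\operatorname{Int}(\operatorname{cl}(Ox))$ for all $x\in X$, $O\in N_G(e)$. For a $d$-open action, $X$ is a disjoint union of clopen sets $\operatorname{cl}(Gx)$, $x\in X$, called the components of the action. Uniformities are given by families of open covers. A uniformity $\mathcal U$ on $X$ is an equiuniformity for $(G,X,\alpha)$ if it is saturated ($gu=\{gU:U\in u\}\in\mathcal U$ for all $u\in\mathcal U$, $g\in G$) and bounded (for every $u\in\mathcal U$ there are $O\in N_G(e)$ and $v\in\mathcal U$ such that the cover $\{OV:V\in v\}$ refines $u$). $(G,X,\alpha)$ is $G$-Tychonoff if there is a compactification $bX$ of $X$ and a continuous action of $G$ on $bX$ extending $\alpha$ (equivalently, via an equivariant embedding $(\mathrm{id},f)$). *)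

theory Defs
  imports "HOL-Analysis.Analysis" "HOL-Algebra.Coset"
begin

definition tychonoff_space :: "'a topology \<Rightarrow> bool" where
  "tychonoff_space X \<longleftrightarrow> completely_regular_space X \<and> t1_space X"

definition topological_group :: "('g, 'm) monoid_scheme \<Rightarrow> 'g topology \<Rightarrow> bool" where
  "topological_group G TG \<longleftrightarrow>
     group G \<and> topspace TG = carrier G \<and>
     continuous_map (prod_topology TG TG) TG (\<lambda>(a, b). a \<otimes>\<^bsub>G\<^esub> b) \<and>
     continuous_map TG TG (\<lambda>a. inv\<^bsub>G\<^esub> a)"

definition G_space :: "('g, 'm) monoid_scheme \<Rightarrow> 'g topology \<Rightarrow> 'x topology \<Rightarrow> ('g \<Rightarrow> 'x \<Rightarrow> 'x) \<Rightarrow> bool" where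
  "G_space G TG X \<alpha> \<longleftrightarrow>
     topological_group G TG \<and>
     continuous_map (prod_topology TG X) X (\<lambda>(g, x). \<alpha> g x) \<and>
     (\<forall>x\<in>topspace X. \<alpha> \<one>\<^bsub>G\<^esub> x = x) \<and>
     (\<forall>g\<in>carrier G. \<forall>h\<in>carrier G. \<forall>x\<in>topspace X. \<alpha> (g \<otimes>\<^bsub>G\<^esub> h) x = \<alpha> g (\<alpha> h x))"

definition action_kernel :: "('g, 'm) monoid_scheme \<Rightarrow> 'x topology \<Rightarrow> ('g \<Rightarrow> 'x \<Rightarrow> 'x) \<Rightarrow> 'g set" where
  "action_kernel G X \<alpha> = {g \<in> carrier G. \<forall>x\<in>topspace X. \<alpha> g x = x}"

definition effective_action :: "('g, 'm) monoid_scheme \<Rightarrow> 'x topology \<Rightarrow> ('g \<Rightarrow> 'x \<Rightarrow> 'x) \<Rightarrow> bool" where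
  "effective_action G X \<alpha> \<longleftrightarrow> action_kernel G X \<alpha> = {\<one>\<^bsub>G\<^esub>}"

definition act_set :: "('g \<Rightarrow> 'x \<Rightarrow> 'x) \<Rightarrow> 'g set \<Rightarrow> 'x set \<Rightarrow> 'x set" where
  "act_set \<alpha> W0 V = {\<alpha> g y | g y. g \<in> W0 \<and> y \<in> V}"

definition orbit_of :: "('g, 'm) monoid_scheme \<Rightarrow> ('g \<Rightarrow> 'x \<Rightarrow> 'x) \<Rightarrow> 'x \<Rightarrow> 'x set" where
  "orbit_of G \<alpha> x = act_set \<alpha> (carrier G) {x}"

definition transitive_action :: "('g, 'm) monoid_scheme \<Rightarrow> 'x topology \<Rightarrow> ('g \<Rightarrow> 'x \<Rightarrow> 'x) \<Rightarrow> bool" where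
  "transitive_action G X \<alpha> \<longleftrightarrow> (\<exists>x\<in>topspace X. orbit_of G \<alpha> x = topspace X)"

definition unit_nbhds :: "('g, 'm) monoid_scheme \<Rightarrow> 'g topology \<Rightarrow> 'g set set" where
  "unit_nbhds G TG = {W0. openin TG W0 \<and> \<one>\<^bsub>G\<^esub> \<in> W0}"

definition open_action :: "('g, 'm) monoid_scheme \<Rightarrow> 'g topology \<Rightarrow> 'x topology \<Rightarrow> ('g \<Rightarrow> 'x \<Rightarrow> 'x) \<Rightarrow> bool" where
  "open_action G TG X \<alpha> \<longleftrightarrow>
     (\<forall>x\<in>topspace X. \<forall>W0\<in>unit_nbhds G TG. x \<in> X interior_of (act_set \<alpha> W0 {x}))"

definition d_open_action :: "('g, 'm) monoid_scheme \<Rightarrow> 'g topology \<Rightarrow> 'x topology \<Rightarrow> ('g \<Rightarrow> 'x \<Rightarrow> 'x) \<Rightarrow> bool" where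
  "d_open_action G TG X \<alpha> \<longleftrightarrow>
     (\<forall>x\<in>topspace X. \<forall>W0\<in>unit_nbhds G TG. x \<in> X interior_of (X closure_of (act_set \<alpha> W0 {x})))"

definition action_components :: "('g, 'm) monoid_scheme \<Rightarrow> 'x topology \<Rightarrow> ('g \<Rightarrow> 'x \<Rightarrow> 'x) \<Rightarrow> 'x set set" where
  "action_components G X \<alpha> = (\<lambda>x. X closure_of (orbit_of G \<alpha> x)) ` topspace X"

definition open_cover :: "'x topology \<Rightarrow> 'x set set \<Rightarrow> bool" where
  "open_cover X u \<longleftrightarrow> (\<forall>U\<in>u. openin X U) \<and> \<Union>u = topspace X"

definition refines :: "'x set set \<Rightarrow> 'x set set \<Rightarrow> bool" where
  "refines u v \<longleftrightarrow> (\<forall>U\<in>u. \<exists>V\<in>v. U \<subseteq> V)"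

definition cover_star :: "'x set \<Rightarrow> 'x set set \<Rightarrow> 'x set" where
  "cover_star A u = \<Union>{U \<in> u. U \<inter> A \<noteq> {}}"

definition uniformity_on :: "'x topology \<Rightarrow> 'x set set set \<Rightarrow> bool" where
  "uniformity_on X \<U> \<longleftrightarrow>
     \<U> \<noteq> {} \<and>
     (\<forall>u\<in>\<U>. open_cover X u) \<and>
     (\<forall>u\<in>\<U>. \<forall>v. open_cover X v \<and> refines u v \<longrightarrow> v \<in> \<U>) \<and>
     (\<forall>u\<in>\<U>. \<forall>v\<in>\<U>. \<exists>w\<in>\<U>. refines w u \<and> refines w v) \<and>
     (\<forall>u\<in>\<U>. \<exists>v\<in>\<U>. refines ((\<lambda>V. cover_star V v) ` v) u) \<and>
     (\<forall>x\<in>topspace X. \<forall>W. openin X W \<and> x \<in> W \<longrightarrow> (\<exists>u\<in>\<U>. cover_star {x} u \<subseteq> W))"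

definition saturated_unif :: "('g, 'm) monoid_scheme \<Rightarrow> ('g \<Rightarrow> 'x \<Rightarrow> 'x) \<Rightarrow> 'x set set set \<Rightarrow> bool" where
  "saturated_unif G \<alpha> \<U> \<longleftrightarrow> (\<forall>u\<in>\<U>. \<forall>g\<in>carrier G. (\<lambda>U. \<alpha> g ` U) ` u \<in> \<U>)"

definition bounded_unif :: "('g, 'm) monoid_scheme \<Rightarrow> 'g topology \<Rightarrow> ('g \<Rightarrow> 'x \<Rightarrow> 'x) \<Rightarrow> 'x set set set \<Rightarrow> bool" where
  "bounded_unif G TG \<alpha> \<U> \<longleftrightarrow>
     (\<forall>u\<in>\<U>. \<exists>W0\<in>unit_nbhds G TG. \<exists>v\<in>\<U>. refines ((\<lambda>V. act_set \<alpha> W0 V) ` v) u)"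

definition equiuniformity :: "('g, 'm) monoid_scheme \<Rightarrow> 'g topology \<Rightarrow> 'x topology \<Rightarrow> ('g \<Rightarrow> 'x \<Rightarrow> 'x) \<Rightarrow> 'x set set set \<Rightarrow> bool" where
  "equiuniformity G TG X \<alpha> \<U> \<longleftrightarrow>
     uniformity_on X \<U> \<and> saturated_unif G \<alpha> \<U> \<and> bounded_unif G TG \<alpha> \<U>"

text \<open>(G,X,alpha) is G-Tychonoff, witnessed by a compactification carried by the type 'k:
  a compact Hausdorff K, a dense embedding f of X into K and a continuous action beta of G on K
  with f equivariant (so (id, f) is an equivariant embedding).  The theorem below quantifies
  over all types 'k.\<close>
definition G_tychonoff :: "'k itself \<Rightarrow> ('g, 'm) monoid_scheme \<Rightarrow> 'g topology \<Rightarrow> 'x topology \<Rightarrow> ('g \<Rightarrow> 'x \<Rightarrow> 'x) \<Rightarrow> bool" where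
  "G_tychonoff _ G TG X \<alpha> \<longleftrightarrow>
     (\<exists>(K :: 'k topology) f \<beta>.
        compact_space K \<and> Hausdorff_space K \<and>
        embedding_map X K f \<and> K closure_of (f ` topspace X) = topspace K \<and>
        G_space G TG K \<beta> \<and>
        (\<forall>g\<in>carrier G. \<forall>x\<in>topspace X. \<beta> g (f x) = f (\<alpha> g x)))"

end

theory Submission
  imports Defs
begin

text \<open>Since \<open>\<phi>\<close> is onto, \<open>G\<close> acts on \<open>X\<close> exactly through the elements of \<open>H\<close>, so kernels
  and orbits correspond. For the topological parts, continuity of \<open>\<phi>\<close> pulls a unit
  neighbourhood \<open>W\<close> of \<open>H\<close> back to the unit neighbourhood \<open>{g. \<phi> g \<in> W}\<close> of \<open>G\<close>, which moves
  every subset of \<open>X\<close> only within where \<open>W\<close> moves it; an equivariant compactification for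
  \<open>H\<close> serves for \<open>G\<close> by letting \<open>g\<close> act as \<open>\<phi> g\<close>.\<close>

lemma kernel_subset_action_kernel:
  assumes "\<forall>x\<in>topspace X. \<gamma> \<one>\<^bsub>H\<^esub> x = x"
    and "\<forall>g\<in>carrier G. \<forall>x\<in>topspace X. \<alpha> g x = \<gamma> (\<phi> g) x"
  shows "kernel G H \<phi> \<subseteq> action_kernel G X \<alpha>"
  using assms by (auto simp: kernel_def action_kernel_def)

lemma image_action_kernel:
  assumes epi: "\<phi> ` carrier G = carrier H"
    and equiv: "\<forall>g\<in>carrier G. \<forall>x\<in>topspace X. \<alpha> g x = \<gamma> (\<phi> g) x"
  shows "\<phi> ` action_kernel G X \<alpha> = action_kernel H X \<gamma>"
proof
  show "\<phi> ` action_kernel G X \<alpha> \<subseteq> action_kernel H X \<gamma>"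
    using equiv epi by (auto simp: action_kernel_def)
next
  show "action_kernel H X \<gamma> \<subseteq> \<phi> ` action_kernel G X \<alpha>"
  proof
    fix h assume h: "h \<in> action_kernel H X \<gamma>"
    then obtain g where g: "g \<in> carrier G" "h = \<phi> g"
      using epi by (auto simp: action_kernel_def)
    with h equiv have "g \<in> action_kernel G X \<alpha>"
      by (auto simp: action_kernel_def)
    with g show "h \<in> \<phi> ` action_kernel G X \<alpha>" by blast
  qed
qed

lemma effective_action_image:
  assumes "\<phi> ` action_kernel G X \<alpha> = action_kernel H X \<gamma>"
    and "\<phi> \<one>\<^bsub>G\<^esub> = \<one>\<^bsub>H\<^esub>"
    and "effective_action G X \<alpha>"
  shows "effective_action H X \<gamma>"
  using assms by (auto simp: effective_action_def)

lemma orbit_of_epi_eq: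
  assumes epi: "\<phi> ` carrier G = carrier H"
    and equiv: "\<forall>g\<in>carrier G. \<forall>x\<in>topspace X. \<alpha> g x = \<gamma> (\<phi> g) x"
    and x: "x \<in> topspace X"
  shows "orbit_of G \<alpha> x = orbit_of H \<gamma> x"
proof -
  have "orbit_of H \<gamma> x = (\<lambda>h. \<gamma> h x) ` \<phi> ` carrier G"
    using epi by (auto simp: orbit_of_def act_set_def)
  also have "\<dots> = (\<lambda>g. \<alpha> g x) ` carrier G"
    using equiv x by (auto simp: image_image)
  also have "\<dots> = orbit_of G \<alpha> x"
    by (auto simp: orbit_of_def act_set_def)
  finally show ?thesis by simp
qed

lemma transitive_action_eq_orbits:
  assumes "\<forall>x\<in>topspace X. orbit_of G \<alpha> x = orbit_of H \<gamma> x"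
    and "transitive_action G X \<alpha>"
  shows "transitive_action H X \<gamma>"
  using assms by (auto simp: transitive_action_def)

lemma action_components_eq_orbits:
  assumes "\<forall>x\<in>topspace X. orbit_of G \<alpha> x = orbit_of H \<gamma> x"
  shows "action_components G X \<alpha> = action_components H X \<gamma>"
  using assms by (auto simp: action_components_def)

lemma (in group_hom) preimage_unit_nbhd:
  assumes "continuous_map TG TH h" and "topspace TG = carrier G"
    and "W \<in> unit_nbhds H TH"
  shows "{g \<in> carrier G. h g \<in> W} \<in> unit_nbhds G TG"
proof -
  have "openin TG {g \<in> topspace TG. h g \<in> W}"
    using assms(1,3) by (auto simp: unit_nbhds_def intro: openin_continuous_map_preimage)
  with assms(2,3) show ?thesis
    by (simp add: unit_nbhds_def)
qed

lemma act_set_preimage_subset: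
  assumes "\<forall>g\<in>carrier G. \<forall>x\<in>topspace X. \<alpha> g x = \<gamma> (\<phi> g) x"
    and "V \<subseteq> topspace X"
  shows "act_set \<alpha> {g \<in> carrier G. \<phi> g \<in> W} V \<subseteq> act_set \<gamma> W V"
  using assms by (fastforce simp: act_set_def)

locale equivariant_continuous_hom = group_hom G H \<phi>
  for G :: "('g, 'm) monoid_scheme" and H :: "('h, 'n) monoid_scheme" and \<phi> :: "'g \<Rightarrow> 'h"
  + fixes TG :: "'g topology" and TH :: "'h topology"
    and X :: "'x topology"
    and \<alpha> :: "'g \<Rightarrow> 'x \<Rightarrow> 'x" and \<gamma> :: "'h \<Rightarrow> 'x \<Rightarrow> 'x"
  assumes cont: "continuous_map TG TH \<phi>"
    and topspace_TG: "topspace TG = carrier G"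
    and equiv: "\<forall>g\<in>carrier G. \<forall>x\<in>topspace X. \<alpha> g x = \<gamma> (\<phi> g) x"
begin

abbreviation pullback :: "'h set \<Rightarrow> 'g set" where
  "pullback W \<equiv> {g \<in> carrier G. \<phi> g \<in> W}"

lemma pullback_unit_nbhd: "W \<in> unit_nbhds H TH \<Longrightarrow> pullback W \<in> unit_nbhds G TG"
  using preimage_unit_nbhd[OF cont topspace_TG] .

lemma act_set_pullback_subset: "V \<subseteq> topspace X \<Longrightarrow> act_set \<alpha> (pullback W) V \<subseteq> act_set \<gamma> W V"
  using act_set_preimage_subset[of G X \<alpha> \<gamma> \<phi>, OF equiv] .

lemma open_action_transfer:
  assumes "open_action G TG X \<alpha>"
  shows "open_action H TH X \<gamma>"
  unfolding open_action_def
proof (intro ballI)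
  fix x W assume x: "x \<in> topspace X" and W: "W \<in> unit_nbhds H TH"
  have "x \<in> X interior_of act_set \<alpha> (pullback W) {x}"
    using assms x pullback_unit_nbhd[OF W] by (simp add: open_action_def)
  moreover have "act_set \<alpha> (pullback W) {x} \<subseteq> act_set \<gamma> W {x}"
    using x by (simp add: act_set_pullback_subset)
  ultimately show "x \<in> X interior_of act_set \<gamma> W {x}"
    using interior_of_mono by blast
qed

lemma d_open_action_transfer:
  assumes "d_open_action G TG X \<alpha>"
  shows "d_open_action H TH X \<gamma>"
  unfolding d_open_action_def
proof (intro ballI)
  fix x W assume x: "x \<in> topspace X" and W: "W \<in> unit_nbhds H TH"
  have "x \<in> X interior_of (X closure_of act_set \<alpha> (pullback W) {x})"
    using assms x pullback_unit_nbhd[OF W] by (simp add: d_open_action_def)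
  moreover have "X closure_of act_set \<alpha> (pullback W) {x} \<subseteq> X closure_of act_set \<gamma> W {x}"
    using x by (simp add: act_set_pullback_subset closure_of_mono)
  ultimately show "x \<in> X interior_of (X closure_of act_set \<gamma> W {x})"
    using interior_of_mono by blast
qed

lemma saturated_unif_transfer:
  assumes unif: "uniformity_on X \<U>" and sat: "saturated_unif H \<gamma> \<U>"
  shows "saturated_unif G \<alpha> \<U>"
  unfolding saturated_unif_def
proof (intro ballI)
  fix u g assume u: "u \<in> \<U>" and g: "g \<in> carrier G"
  have "\<alpha> g ` U = \<gamma> (\<phi> g) ` U" if "U \<in> u" for U
  proof (rule image_cong[OF refl])
    have "U \<subseteq> topspace X"
      using unif u that by (auto simp: uniformity_on_def open_cover_def)
    then show "\<alpha> g x = \<gamma> (\<phi> g) x" if "x \<in> U" for x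
      using equiv g that by blast
  qed
  then have "(\<lambda>U. \<alpha> g ` U) ` u = (\<lambda>U. \<gamma> (\<phi> g) ` U) ` u"
    by (rule image_cong[OF refl])
  then show "(\<lambda>U. \<alpha> g ` U) ` u \<in> \<U>"
    using sat u g by (simp add: saturated_unif_def)
qed

lemma bounded_unif_transfer:
  assumes unif: "uniformity_on X \<U>" and bd: "bounded_unif H TH \<gamma> \<U>"
  shows "bounded_unif G TG \<alpha> \<U>"
  unfolding bounded_unif_def
proof
  fix u assume "u \<in> \<U>"
  then obtain W v where W: "W \<in> unit_nbhds H TH" and v: "v \<in> \<U>"
    and ref: "refines ((\<lambda>V. act_set \<gamma> W V) ` v) u"
    using bd by (auto simp: bounded_unif_def)
  have "refines ((\<lambda>V. act_set \<alpha> (pullback W) V) ` v) u"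
    unfolding refines_def
  proof
    fix U assume "U \<in> (\<lambda>V. act_set \<alpha> (pullback W) V) ` v"
    then obtain V where V: "V \<in> v" and U: "U = act_set \<alpha> (pullback W) V"
      by blast
    have "V \<subseteq> topspace X"
      using unif v V by (auto simp: uniformity_on_def open_cover_def)
    then have "U \<subseteq> act_set \<gamma> W V"
      unfolding U by (rule act_set_pullback_subset)
    moreover obtain U' where "U' \<in> u" "act_set \<gamma> W V \<subseteq> U'"
      using ref V by (auto simp: refines_def)
    ultimately show "\<exists>U'\<in>u. U \<subseteq> U'"
      by blast
  qed
  then show "\<exists>W0\<in>unit_nbhds G TG. \<exists>v\<in>\<U>. refines ((\<lambda>V. act_set \<alpha> W0 V) ` v) u"
    using pullback_unit_nbhd[OF W] v by blast
qed

lemma equiuniformity_transfer: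
  assumes "equiuniformity H TH X \<gamma> \<U>"
  shows "equiuniformity G TG X \<alpha> \<U>"
  using assms saturated_unif_transfer bounded_unif_transfer
  by (simp add: equiuniformity_def)

end

lemma G_space_pullback:
  assumes KH: "G_space H TH K \<beta>" and tgG: "topological_group G TG"
    and hom: "\<phi> \<in> hom G H" and cont: "continuous_map TG TH \<phi>"
  shows "G_space G TG K (\<lambda>g. \<beta> (\<phi> g))"
proof -
  interpret group_hom G H \<phi>
    using KH tgG hom by (simp add: G_space_def topological_group_def group_hom_def group_hom_axioms_def)
  have "continuous_map (prod_topology TG K) (prod_topology TH K) (\<lambda>(g, k). (\<phi> g, k))"
    using continuous_map_compose[OF continuous_map_fst cont]
    by (simp add: continuous_map_paired continuous_map_snd case_prod_unfold o_def)
  moreover have "continuous_map (prod_topology TH K) K (\<lambda>(h, k). \<beta> h k)"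
    using KH by (simp add: G_space_def)
  ultimately have "continuous_map (prod_topology TG K) K (\<lambda>(g, k). \<beta> (\<phi> g) k)"
    by (auto dest: continuous_map_compose simp: o_def case_prod_unfold)
  with KH tgG show ?thesis
    by (simp add: G_space_def)
qed

lemma G_tychonoff_pullback:
  assumes "G_tychonoff TYPE('k) H TH X \<gamma>" and "topological_group G TG"
    and "\<phi> \<in> hom G H" and "continuous_map TG TH \<phi>"
    and equiv: "\<forall>g\<in>carrier G. \<forall>x\<in>topspace X. \<alpha> g x = \<gamma> (\<phi> g) x"
  shows "G_tychonoff TYPE('k) G TG X \<alpha>"
proof -
  obtain K :: "'k topology" and f \<beta> where
    K: "compact_space K" "Hausdorff_space K" "embedding_map X K f"
       "K closure_of (f ` topspace X) = topspace K"
    and KH: "G_space H TH K \<beta>"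
    and f_equiv: "\<forall>h\<in>carrier H. \<forall>x\<in>topspace X. \<beta> h (f x) = f (\<gamma> h x)"
    using assms(1) unfolding G_tychonoff_def by blast
  have "G_space G TG K (\<lambda>g. \<beta> (\<phi> g))"
    using G_space_pullback[OF KH assms(2-4)] .
  moreover have "\<forall>g\<in>carrier G. \<forall>x\<in>topspace X. \<beta> (\<phi> g) (f x) = f (\<alpha> g x)"
    using f_equiv equiv \<open>\<phi> \<in> hom G H\<close> by (auto simp: hom_def)
  ultimately show ?thesis
    unfolding G_tychonoff_def using K by blast
qed

theorem proposition2p11:
  fixes G :: "('g, 'm) monoid_scheme" and TG :: "'g topology"
    and H :: "('h, 'n) monoid_scheme" and TH :: "'h topology"
    and X :: "'x topology"
    and \<alpha> :: "'g \<Rightarrow> 'x \<Rightarrow> 'x" and \<gamma> :: "'h \<Rightarrow> 'x \<Rightarrow> 'x"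
    and \<phi> :: "'g \<Rightarrow> 'h"
  assumes tychG: "tychonoff_space TG" and tychH: "tychonoff_space TH"
    and tychX: "tychonoff_space X"
    and GX: "G_space G TG X \<alpha>" and HX: "G_space H TH X \<gamma>"
    and hom: "\<phi> \<in> hom G H" and cont: "continuous_map TG TH \<phi>"
    and equiv: "\<forall>g\<in>carrier G. \<forall>x\<in>topspace X. \<alpha> g x = \<gamma> (\<phi> g) x"
    and epi: "\<phi> ` carrier G = carrier H"
  shows
    "kernel G H \<phi> \<subseteq> action_kernel G X \<alpha>
     \<and> (\<phi> ` action_kernel G X \<alpha> = action_kernel H X \<gamma>
        \<and> (effective_action G X \<alpha> \<longrightarrow> effective_action H X \<gamma>))
     \<and> ((\<forall>x\<in>topspace X. orbit_of G \<alpha> x = orbit_of H \<gamma> x)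
        \<and> (transitive_action G X \<alpha> \<longrightarrow> transitive_action H X \<gamma>))
     \<and> ((open_action G TG X \<alpha> \<longrightarrow> open_action H TH X \<gamma>)
        \<and> (d_open_action G TG X \<alpha> \<longrightarrow> d_open_action H TH X \<gamma>)
        \<and> (open_action G TG X \<alpha> \<or> d_open_action G TG X \<alpha> \<longrightarrow>
             action_components G X \<alpha> = action_components H X \<gamma>))
     \<and> ((\<forall>\<U>. equiuniformity H TH X \<gamma> \<U> \<longrightarrow> equiuniformity G TG X \<alpha> \<U>)
        \<and> (G_tychonoff TYPE('k) H TH X \<gamma> \<longrightarrow> G_tychonoff TYPE('k) G TG X \<alpha>))"
proof -
  have tgG: "topological_group G TG"
    using GX by (simp add: G_space_def)
  have "group_hom G H \<phi>"
    using GX HX hom by (simp add: G_space_def topological_group_def group_hom_def group_hom_axioms_def)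
  then interpret equivariant_continuous_hom G H \<phi> TG TH X \<alpha> \<gamma>
    using cont tgG equiv by (simp add: equivariant_continuous_hom_def
        equivariant_continuous_hom_axioms_def topological_group_def)
  have kernels: "\<phi> ` action_kernel G X \<alpha> = action_kernel H X \<gamma>"
    using epi equiv by (rule image_action_kernel)
  have orbits: "\<forall>x\<in>topspace X. orbit_of G \<alpha> x = orbit_of H \<gamma> x"
    using orbit_of_epi_eq[OF epi equiv] by blast
  have "\<forall>x\<in>topspace X. \<gamma> \<one>\<^bsub>H\<^esub> x = x"
    using HX by (simp add: G_space_def)
  then have "kernel G H \<phi> \<subseteq> action_kernel G X \<alpha>"
    using equiv by (rule kernel_subset_action_kernel)
  moreover have "effective_action G X \<alpha> \<longrightarrow> effective_action H X \<gamma>"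
    using effective_action_image[OF kernels hom_one] by blast
  moreover have "G_tychonoff TYPE('k) H TH X \<gamma> \<longrightarrow> G_tychonoff TYPE('k) G TG X \<alpha>"
    using G_tychonoff_pullback tgG hom cont equiv by blast
  ultimately show ?thesis
    using kernels orbits transitive_action_eq_orbits[OF orbits]
      action_components_eq_orbits[OF orbits] open_action_transfer d_open_action_transfer
      equiuniformity_transfer
    by simp
qed

end
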